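(* Let $G=(V,D)$ be a simple directed graph that is not complete, and let $J=J(\psi_G)$. Then for every node $i\in V$ there exists a set $S$ of $|D|+1$ columns of $J$ such that $S$ contains no column $K_{ij}$ with $j\in V$ (including $K_{ii}$), and $\mathrm{rank}(J_S)\ge|D|-|\mathrm{ch}(i)|+1$.
   Context: A directed graph $G=(V,D)$ has edge set $D\subseteq V\times V$ of ordered pairs $(i,j)$, $i\neq j$. It is simple if $(i,j)$ and $(j,i)$ are never both in $D$. It is complete if every pair of distinct nodes is adjacent. $\mathrm{ch}(i)$ is the set of children of $i$. $\Lambda$ is the $V\times V$ matrix with indeterminate entries $\lambda_{ij}$ for $(i,j)\in D$ and zeros elsewhere, and $s$ is a further indeterminate. Let $\psi_G(\Lambda,s)=s(I-\Lambda)(I-\Lambda)^T=K$. The transposed Jacobian $J(\psi_G)$ has rows indexed by $\{\lambda_{kl}:(k,l)\in D\}\cup\{s\}$ and columns indexed by $K_{ij}$ (with $K_{ij}=K_{ji}$), with entries $\partial K_{ij}/\partial\theta$. $J_S$ is the submatrix on the columns in $S$, and rank means rank over $\mathbb{R}(\lambda,s)$. *)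

theory Defs
  imports "HOL-Library.Poly_Mapping" "HOL-Library.Option_ord" "HOL-Library.Product_Lexorder"
    "HOL-Computational_Algebra.Fraction_Field" "Jordan_Normal_Form.DL_Rank"
begin

type_synonym 'x rpoly = "('x \<Rightarrow>\<^sub>0 nat) \<Rightarrow>\<^sub>0 real"

definition pvar :: "'x \<Rightarrow> 'x rpoly" where
  "pvar x = Poly_Mapping.single (Poly_Mapping.single x 1) 1"

definition pconst :: "real \<Rightarrow> 'x rpoly" where
  "pconst c = Poly_Mapping.single 0 c"

definition pdiff :: "'x \<Rightarrow> 'x rpoly \<Rightarrow> 'x rpoly" where
  "pdiff x p = (\<Sum>(m :: 'x \<Rightarrow>\<^sub>0 nat)\<in>Poly_Mapping.keys p.
      Poly_Mapping.single (m - Poly_Mapping.single x 1) (real (Poly_Mapping.lookup m x) * Poly_Mapping.lookup p m))"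

(* Indeterminates of the parametrization: Some (k,l) is lambda_kl, None is s *)
type_synonym 'v param = "('v \<times> 'v) option"

definition simple_digraph :: "'v set \<Rightarrow> ('v \<times> 'v) set \<Rightarrow> bool" where
  "simple_digraph V D \<longleftrightarrow> finite V \<and> D \<subseteq> V \<times> V \<and> (\<forall>i. (i, i) \<notin> D)
      \<and> (\<forall>i j. (i, j) \<in> D \<longrightarrow> (j, i) \<notin> D)"

definition complete_digraph :: "'v set \<Rightarrow> ('v \<times> 'v) set \<Rightarrow> bool" where
  "complete_digraph V D \<longleftrightarrow> (\<forall>i\<in>V. \<forall>j\<in>V. i \<noteq> j \<longrightarrow> (i, j) \<in> D \<or> (j, i) \<in> D)"

definition children :: "('v \<times> 'v) set \<Rightarrow> 'v \<Rightarrow> 'v set" where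
  "children D i = {j. (i, j) \<in> D}"

definition Lam :: "('v \<times> 'v) set \<Rightarrow> 'v \<Rightarrow> 'v \<Rightarrow> 'v param rpoly" where
  "Lam D i j = (if (i, j) \<in> D then pvar (Some (i, j)) else 0)"

definition IminusLam :: "('v \<times> 'v) set \<Rightarrow> 'v \<Rightarrow> 'v \<Rightarrow> 'v param rpoly" where
  "IminusLam D i j = (if i = j then 1 else 0) - Lam D i j"

(* entries of K = psi_G(Lambda, s) = s (I - Lambda)(I - Lambda)^T *)
definition Kmat :: "'v set \<Rightarrow> ('v \<times> 'v) set \<Rightarrow> 'v \<Rightarrow> 'v \<Rightarrow> 'v param rpoly" where
  "Kmat V D i j = pvar None * (\<Sum>k\<in>V. IminusLam D i k * IminusLam D j k)"

(* row index set of the transposed Jacobian: {lambda_kl : (k,l) in D} \<union> {s} *)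
definition params :: "('v \<times> 'v) set \<Rightarrow> 'v param set" where
  "params D = Some ` D \<union> {None}"

(* column index set: entries K_ij of the symmetric matrix K, K_ij = K_ji,
   represented by pairs (i,j) with i \<le> j (including the diagonal) *)
definition Kcols :: "('v::linorder) set \<Rightarrow> ('v \<times> 'v) set" where
  "Kcols V = {(i, j). i \<in> V \<and> j \<in> V \<and> i \<le> j}"

(* Rows and columns are enumerated in increasing order (irrelevant for the rank). *)
definition JS :: "('v::linorder) set \<Rightarrow> ('v \<times> 'v) set \<Rightarrow> ('v \<times> 'v) set
                   \<Rightarrow> 'v param rpoly fract mat" where
  "JS V D S = (let rs = sorted_list_of_set (params D); cs = sorted_list_of_set S in
     mat (length rs) (length cs)
       (\<lambda>(a, b). Fract (pdiff (rs ! a) (Kmat V D (fst (cs ! b)) (snd (cs ! b)))) 1))"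

definition rankJS :: "('v::linorder) set \<Rightarrow> ('v \<times> 'v) set \<Rightarrow> ('v \<times> 'v) set \<Rightarrow> nat" where
  "rankJS V D S = vec_space.rank (card (params D)) (JS V D S)"

end

theory Submission
  imports Defs "Jordan_Normal_Form.DL_Rank_Submatrix"
begin

text \<open>Specialise the parameters to the point \<open>s = 1\<close>, \<open>\<lambda>\<^sub>k\<^sub>l = [l = i]\<close>. Pair each arc \<open>(k, l)\<close>
  with \<open>k \<noteq> i\<close> with a column avoiding \<open>i\<close>: \<open>K\<^sub>k\<^sub>l\<close> if \<open>l \<noteq> i\<close>, and \<open>K\<^sub>k\<^sub>k\<close> if \<open>l = i\<close>; add the row
  of \<open>s\<close> and one extra column \<open>K\<^sub>a\<^sub>b\<close> avoiding \<open>i\<close>, where either \<open>a = b\<close> is not a parent of \<open>i\<close>,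
  or, if every other node is a parent of \<open>i\<close>, \<open>a, b\<close> are non-adjacent (\<open>G\<close> is not complete).
  At the chosen point the resulting square minor of size \<open>|D| - |ch(i)| + 1\<close> has trivial kernel:
  a row \<open>\<lambda>\<^sub>k\<^sub>l\<close> with \<open>l \<noteq> i\<close> only sees its own column, a row \<open>\<lambda>\<^sub>k\<^sub>i\<close> gives
  \<open>2 w\<^sub>k\<^sub>k + \<alpha>\<^sub>k w\<^sub>0 = 0\<close>, and summing these against the row of \<open>s\<close> leaves
  \<open>([a = b] - [a and b are parents of i]) w\<^sub>0 = 0\<close>. A minor that is nonsingular at a point is
  nonsingular over \<open>\<real>(\<lambda>, s)\<close>. Finally, \<open>|D|\<close> is smaller than the number of unordered pairs of
  nodes, which inject into the columns avoiding \<open>i\<close>, so the columns can be padded to \<open>|D| + 1\<close>.\<close>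

section \<open>Evaluating polynomials and their derivatives at a point\<close>

definition coeff_sum :: "(('x \<Rightarrow>\<^sub>0 nat) \<Rightarrow> real) \<Rightarrow> 'x rpoly \<Rightarrow> real" where
  "coeff_sum \<phi> p = (\<Sum>m\<in>Poly_Mapping.keys p. Poly_Mapping.lookup p m * \<phi> m)"

lemma coeff_sum_superset:
  assumes "finite A" "Poly_Mapping.keys p \<subseteq> A"
  shows "coeff_sum \<phi> p = (\<Sum>m\<in>A. Poly_Mapping.lookup p m * \<phi> m)"
  unfolding coeff_sum_def
  by (rule sum.mono_neutral_left) (use assms in \<open>auto simp: in_keys_iff\<close>)

lemma coeff_sum_add: "coeff_sum \<phi> (p + q) = coeff_sum \<phi> p + coeff_sum \<phi> q"
proof -
  let ?A = "Poly_Mapping.keys p \<union> Poly_Mapping.keys q"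
  have "coeff_sum \<phi> (p + q) = (\<Sum>m\<in>?A. Poly_Mapping.lookup (p + q) m * \<phi> m)"
    using keys_add[of p q] by (intro coeff_sum_superset) auto
  also have "\<dots> = (\<Sum>m\<in>?A. Poly_Mapping.lookup p m * \<phi> m) + (\<Sum>m\<in>?A. Poly_Mapping.lookup q m * \<phi> m)"
    by (simp add: lookup_add distrib_right sum.distrib)
  also have "\<dots> = coeff_sum \<phi> p + coeff_sum \<phi> q"
    by (subst (1 2) coeff_sum_superset[of ?A]) auto
  finally show ?thesis .
qed

interpretation coeff_sum: ab_group_add_hom "coeff_sum \<phi>"
  by unfold_locales (simp_all add: coeff_sum_add coeff_sum_def[of _ 0])

lemma coeff_sum_single: "coeff_sum \<phi> (Poly_Mapping.single m c) = c * \<phi> m"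
  by (simp add: coeff_sum_def)

lemma sum_single_lookup: "(\<Sum>a\<in>Poly_Mapping.keys p. Poly_Mapping.single a (Poly_Mapping.lookup p a)) = p"
proof (rule poly_mapping_eqI)
  fix k
  show "Poly_Mapping.lookup (\<Sum>a\<in>Poly_Mapping.keys p. Poly_Mapping.single a (Poly_Mapping.lookup p a)) k
      = Poly_Mapping.lookup p k"
    by (simp add: lookup_sum lookup_single when_def in_keys_iff)
qed

lemma coeff_sum_mult:
  "coeff_sum \<phi> (p * q) = (\<Sum>a\<in>Poly_Mapping.keys p. \<Sum>b\<in>Poly_Mapping.keys q.
     Poly_Mapping.lookup p a * Poly_Mapping.lookup q b * \<phi> (a + b))"
proof -
  have "p * q = (\<Sum>a\<in>Poly_Mapping.keys p. \<Sum>b\<in>Poly_Mapping.keys q.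
      Poly_Mapping.single (a + b) (Poly_Mapping.lookup p a * Poly_Mapping.lookup q b))"
    by (subst (1 2) sum_single_lookup[symmetric])
      (simp only: sum_distrib_left sum_distrib_right mult_single sum.swap[where A = "Poly_Mapping.keys q"])
  then show ?thesis by (simp add: coeff_sum.hom_sum coeff_sum_single)
qed

definition monom_eval :: "('x \<Rightarrow> real) \<Rightarrow> ('x \<Rightarrow>\<^sub>0 nat) \<Rightarrow> real" where
  "monom_eval f m = (\<Prod>x\<in>Poly_Mapping.keys m. f x ^ Poly_Mapping.lookup m x)"

lemma monom_eval_superset:
  assumes "finite A" "Poly_Mapping.keys m \<subseteq> A"
  shows "monom_eval f m = (\<Prod>x\<in>A. f x ^ Poly_Mapping.lookup m x)"
  unfolding monom_eval_def
  by (rule prod.mono_neutral_left) (use assms in \<open>auto simp: in_keys_iff\<close>)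

lemma monom_eval_add: "monom_eval f (a + b) = monom_eval f a * monom_eval f b"
proof -
  let ?A = "Poly_Mapping.keys a \<union> Poly_Mapping.keys b"
  have "monom_eval f (a + b) = (\<Prod>x\<in>?A. f x ^ Poly_Mapping.lookup (a + b) x)"
    using keys_add[of a b] by (intro monom_eval_superset) auto
  also have "\<dots> = (\<Prod>x\<in>?A. f x ^ Poly_Mapping.lookup a x) * (\<Prod>x\<in>?A. f x ^ Poly_Mapping.lookup b x)"
    by (simp add: lookup_add power_add prod.distrib)
  also have "\<dots> = monom_eval f a * monom_eval f b"
    by (subst (1 2) monom_eval_superset[of ?A]) auto
  finally show ?thesis .
qed

definition peval :: "('x \<Rightarrow> real) \<Rightarrow> 'x rpoly \<Rightarrow> real" where
  "peval f = coeff_sum (monom_eval f)"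

lemma peval_mult: "peval f (p * q) = peval f p * peval f q"
  unfolding peval_def coeff_sum_mult monom_eval_add
  by (simp add: coeff_sum_def sum_product mult_ac)

interpretation peval: comm_ring_hom "peval f"
proof
  show "peval f (p + q) = peval f p + peval f q" for p q
    by (simp add: peval_def coeff_sum.hom_add)
  show "peval f 1 = 1"
    by (simp add: peval_def coeff_sum_def monom_eval_def)
  show "peval f (p * q) = peval f p * peval f q" for p q
    by (rule peval_mult)
qed (simp add: peval_def)

lemma peval_pvar: "peval f (pvar y) = f y"
  by (simp add: peval_def pvar_def coeff_sum_single monom_eval_def)

text \<open>Derivatives are evaluated monomial by monomial, where the Leibniz rule is easy to check;
  \<open>peval_pdiff\<close> relates this to \<^const>\<open>pdiff\<close>.\<close>

definition monom_deriv_eval :: "('x \<Rightarrow> real) \<Rightarrow> 'x \<Rightarrow> ('x \<Rightarrow>\<^sub>0 nat) \<Rightarrow> real" where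
  "monom_deriv_eval f x m = real (Poly_Mapping.lookup m x) * monom_eval f (m - Poly_Mapping.single x 1)"

definition deriv_eval :: "('x \<Rightarrow> real) \<Rightarrow> 'x \<Rightarrow> 'x rpoly \<Rightarrow> real" where
  "deriv_eval f x = coeff_sum (monom_deriv_eval f x)"

lemma peval_pdiff: "peval f (pdiff x p) = deriv_eval f x p"
  by (simp add: pdiff_def peval_def deriv_eval_def coeff_sum.hom_sum coeff_sum_single
      coeff_sum_def[of "monom_deriv_eval f x"] monom_deriv_eval_def mult_ac)

lemma monom_deriv_eval_add:
  "monom_deriv_eval f x (a + b) = monom_deriv_eval f x a * monom_eval f b + monom_eval f a * monom_deriv_eval f x b"
proof -
  let ?e = "Poly_Mapping.single x (1::nat)"
  have shift_left: "real (Poly_Mapping.lookup a x) * monom_eval f (a + b - ?e) = monom_deriv_eval f x a * monom_eval f b"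
  proof (cases "Poly_Mapping.lookup a x = 0")
    case False
    then have "a + b - ?e = (a - ?e) + b"
      by (intro poly_mapping_eqI) (auto simp: lookup_add lookup_minus lookup_single when_def)
    then show ?thesis by (simp add: monom_deriv_eval_def monom_eval_add)
  qed (simp add: monom_deriv_eval_def)
  have shift_right: "real (Poly_Mapping.lookup b x) * monom_eval f (a + b - ?e) = monom_eval f a * monom_deriv_eval f x b"
  proof (cases "Poly_Mapping.lookup b x = 0")
    case False
    then have "a + b - ?e = a + (b - ?e)"
      by (intro poly_mapping_eqI) (auto simp: lookup_add lookup_minus lookup_single when_def)
    then show ?thesis by (simp add: monom_deriv_eval_def monom_eval_add)
  qed (simp add: monom_deriv_eval_def)
  have "monom_deriv_eval f x (a + b) = real (Poly_Mapping.lookup a x) * monom_eval f (a + b - ?e)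
      + real (Poly_Mapping.lookup b x) * monom_eval f (a + b - ?e)"
    by (simp add: monom_deriv_eval_def lookup_add distrib_right)
  with shift_left shift_right show ?thesis by simp
qed

lemma deriv_eval_mult:
  "deriv_eval f x (p * q) = deriv_eval f x p * peval f q + peval f p * deriv_eval f x q"
proof -
  let ?p = "Poly_Mapping.lookup p" and ?q = "Poly_Mapping.lookup q"
  have "deriv_eval f x (p * q) =
      (\<Sum>a\<in>Poly_Mapping.keys p. \<Sum>b\<in>Poly_Mapping.keys q. (?p a * monom_deriv_eval f x a) * (?q b * monom_eval f b))
    + (\<Sum>a\<in>Poly_Mapping.keys p. \<Sum>b\<in>Poly_Mapping.keys q. (?p a * monom_eval f a) * (?q b * monom_deriv_eval f x b))"
    unfolding deriv_eval_def coeff_sum_mult monom_deriv_eval_add by (simp add: algebra_simps sum.distrib)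
  then show ?thesis
    unfolding sum_product[symmetric] by (simp add: deriv_eval_def peval_def coeff_sum_def)
qed

interpretation deriv_eval: ab_group_add_hom "deriv_eval f x"
  unfolding deriv_eval_def by (rule coeff_sum.ab_group_add_hom_axioms)

lemma deriv_eval_1: "deriv_eval f x 1 = 0"
  by (simp add: deriv_eval_def coeff_sum_def monom_deriv_eval_def)

lemma deriv_eval_pvar: "deriv_eval f x (pvar y) = of_bool (x = y)"
  by (simp add: deriv_eval_def pvar_def coeff_sum_single monom_deriv_eval_def lookup_single monom_eval_def)

section \<open>Minors and rank\<close>

interpretation Fract_embedding: inj_comm_ring_hom "\<lambda>p :: 'a :: idom. Fract p 1"
proof
  show "Fract (p * q) 1 = Fract p 1 * Fract q 1" "Fract (p + q) 1 = Fract p 1 + Fract q 1" for p q :: 'a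
    by simp_all
  show "p = 0" if "Fract p 1 = 0" for p :: 'a
    using that by (simp add: Zero_fract_def eq_fract)
qed (simp_all add: One_fract_def Zero_fract_def)

lemma bij_betw_pick:
  assumes "finite K"
  shows "bij_betw (pick K) {..<card K} K"
proof (rule bij_betw_byWitness[where f' = "\<lambda>b. card {a \<in> K. a < b}"])
  show "\<forall>b\<in>K. pick K (card {a \<in> K. a < b}) = b"
    by (simp add: pick_card_in_set)
  show "\<forall>q\<in>{..<card K}. card {a \<in> K. a < pick K q} = q"
    by (simp add: card_pick)
  show "pick K ` {..<card K} \<subseteq> K"
    by (auto intro: pick_in_set)
  show "(\<lambda>b. card {a \<in> K. a < b}) ` K \<subseteq> {..<card K}"
  proof (intro image_subsetI)
    fix b assume "b \<in> K"
    then have "{a \<in> K. a < b} \<subset> K" by auto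
    with assms show "card {a \<in> K. a < b} \<in> {..<card K}"
      by (metis lessThan_iff psubset_card_mono)
  qed
qed

lemma det_submatrix_neq_0_if_kernel_trivial:
  fixes A :: "'a :: field mat"
  assumes A: "A \<in> carrier_mat n m" and I: "I \<subseteq> {..<n}" and J: "J \<subseteq> {..<m}"
    and card: "card I = card J"
    and kernel: "\<And>w. \<forall>a\<in>I. (\<Sum>b\<in>J. A $$ (a, b) * w b) = 0 \<Longrightarrow> \<forall>b\<in>J. w b = 0"
  shows "det (submatrix A I J) \<noteq> 0"
proof
  let ?r = "card J"
  have fin: "finite I" "finite J"
    using I J finite_subset by blast+
  have rows: "{a. a < dim_row A \<and> a \<in> I} = I" and cols: "{b. b < dim_col A \<and> b \<in> J} = J"
    using A I J by auto
  have carrier: "submatrix A I J \<in> carrier_mat ?r ?r"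
    by (rule carrier_matI) (simp_all add: dim_submatrix rows cols card)
  assume "det (submatrix A I J) = 0"
  then obtain v where v: "v \<in> carrier_vec ?r" "v \<noteq> 0\<^sub>v ?r" "submatrix A I J *\<^sub>v v = 0\<^sub>v ?r"
    using det_0_iff_vec_prod_zero_field[OF carrier] by auto
  define w where "w b = v $ card {a \<in> J. a < b}" for b
  have w_pick: "w (pick J q) = v $ q" if "q < ?r" for q
    using that by (simp add: w_def card_pick)
  have "\<forall>a\<in>I. (\<Sum>b\<in>J. A $$ (a, b) * w b) = 0"
  proof
    fix a assume "a \<in> I"
    then obtain p where p: "p < card I" "pick I p = a"
      using bij_betw_pick[OF fin(1)] by (metis bij_betw_iff_bijections lessThan_iff)
    have "0 = (submatrix A I J *\<^sub>v v) $ p"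
      using v p card by simp
    also have "\<dots> = (\<Sum>q\<in>{0..<?r}. submatrix A I J $$ (p, q) * v $ q)"
      using carrier v(1) p card by (auto simp: scalar_prod_def intro!: sum.cong)
    also have "\<dots> = (\<Sum>q<?r. A $$ (a, pick J q) * v $ q)"
      using p card by (intro sum.cong) (auto simp: submatrix_index rows cols)
    also have "\<dots> = (\<Sum>b\<in>J. A $$ (a, b) * w b)"
      using sum.reindex_bij_betw[OF bij_betw_pick[OF fin(2)], of "\<lambda>b. A $$ (a, b) * w b"]
      by (simp add: w_pick)
    finally show "(\<Sum>b\<in>J. A $$ (a, b) * w b) = 0" by simp
  qed
  then have "\<forall>b\<in>J. w b = 0"
    by (rule kernel)
  then have "v = 0\<^sub>v ?r"
    using v(1) w_pick pick_in_set[of _ J] by (intro eq_vecI) auto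
  with v(2) show False ..
qed

lemma submatrix_map_mat: "submatrix (map_mat f A) I J = map_mat f (submatrix A I J)"
  by (rule eq_matI) (auto simp: dim_submatrix submatrix_index pick_le)

lemma bij_betw_nth_filter:
  assumes "distinct xs" "R \<subseteq> set xs"
  shows "bij_betw (nth xs) {a. a < length xs \<and> xs ! a \<in> R} R"
  using assms by (fastforce simp: bij_betw_def inj_on_def nth_eq_iff_index_eq in_set_conv_nth)

definition jac_at :: "('v param \<Rightarrow> real) \<Rightarrow> 'v set \<Rightarrow> ('v \<times> 'v) set \<Rightarrow> 'v param \<Rightarrow> 'v \<times> 'v \<Rightarrow> real" where
  "jac_at f V D x c = deriv_eval f x (Kmat V D (fst c) (snd c))"

lemma rank_Fract_ge_card_if_minor_at_point:
  fixes P :: "'x::linorder rpoly mat"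
  assumes P: "P \<in> carrier_mat n m" and J: "J \<subseteq> {..<m}"
    and minor: "det (submatrix (map_mat (peval f) P) I J) \<noteq> 0"
  shows "card J \<le> vec_space.rank n (map_mat (\<lambda>p. Fract p 1) P)"
proof -
  have "det (submatrix (map_mat (\<lambda>p. Fract p 1) P) I J) \<noteq> 0"
    using minor by (auto simp: submatrix_map_mat)
  moreover have "map_mat (\<lambda>p. Fract p 1) P \<in> carrier_mat n m"
    using P by simp
  ultimately have "card {b. b < m \<and> b \<in> J} \<le> vec_space.rank n (map_mat (\<lambda>p. Fract p 1) P)"
    using vec_space.rank_gt_minor by blast
  moreover have "{b. b < m \<and> b \<in> J} = J"
    using J by auto
  ultimately show ?thesis
    by simp
qed

lemma trivial_kernel_reindex:
  fixes g :: "'r \<Rightarrow> 'c \<Rightarrow> 'a :: semiring_0"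
  assumes bij: "bij_betw \<rho> I R" "bij_betw \<gamma> J C"
    and kernel: "\<And>w. \<forall>x\<in>R. (\<Sum>c\<in>C. g x c * w c) = 0 \<Longrightarrow> \<forall>c\<in>C. w c = 0"
    and w: "\<forall>a\<in>I. (\<Sum>b\<in>J. g (\<rho> a) (\<gamma> b) * w b) = 0"
  shows "\<forall>b\<in>J. w b = 0"
proof -
  define w' where "w' = w \<circ> the_inv_into J \<gamma>"
  have w': "w' (\<gamma> b) = w b" if "b \<in> J" for b
    using that bij(2) by (simp add: w'_def the_inv_into_f_f bij_betw_def)
  have "\<forall>x\<in>R. (\<Sum>c\<in>C. g x c * w' c) = 0"
  proof
    fix x assume "x \<in> R"
    then obtain a where a: "a \<in> I" "\<rho> a = x"
      using bij(1) by (auto simp: bij_betw_def)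
    have "(\<Sum>c\<in>C. g x c * w' c) = (\<Sum>b\<in>J. g x (\<gamma> b) * w' (\<gamma> b))"
      by (rule sum.reindex_bij_betw[OF bij(2), symmetric])
    also have "\<dots> = (\<Sum>b\<in>J. g (\<rho> a) (\<gamma> b) * w b)"
      using a w' by simp
    finally show "(\<Sum>c\<in>C. g x c * w' c) = 0"
      using w a by auto
  qed
  then have "\<forall>c\<in>C. w' c = 0"
    by (rule kernel)
  then show ?thesis
    using bij(2) w' by (auto simp: bij_betw_def)
qed

lemma rankJS_ge_card_if_kernel_trivial:
  fixes V :: "'v::linorder set" and f :: "'v param \<Rightarrow> real"
  assumes "finite D" "finite S" and R: "R \<subseteq> params D" and C: "C \<subseteq> S" and card: "card R = card C"
    and kernel: "\<And>w. \<forall>x\<in>R. (\<Sum>c\<in>C. jac_at f V D x c * w c) = 0 \<Longrightarrow> \<forall>c\<in>C. w c = 0"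
  shows "card C \<le> rankJS V D S"
proof -
  define rs where "rs = sorted_list_of_set (params D)"
  define cs where "cs = sorted_list_of_set S"
  have "finite (params D)"
    using assms(1) by (simp add: params_def)
  then have rs: "distinct rs" "set rs = params D" "length rs = card (params D)"
    by (simp_all add: rs_def)
  have cs: "distinct cs" "set cs = S"
    using assms(2) by (simp_all add: cs_def)
  define P where "P = mat (length rs) (length cs)
    (\<lambda>(a, b). pdiff (rs ! a) (Kmat V D (fst (cs ! b)) (snd (cs ! b))))"
  define I where "I = {a. a < length rs \<and> rs ! a \<in> R}"
  define J where "J = {b. b < length cs \<and> cs ! b \<in> C}"
  have bij_I: "bij_betw (nth rs) I R"
    unfolding I_def using rs R by (intro bij_betw_nth_filter) auto
  have bij_J: "bij_betw (nth cs) J C"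
    unfolding J_def using cs C by (intro bij_betw_nth_filter) auto
  have "det (submatrix (map_mat (peval f) P) I J) \<noteq> 0"
  proof (rule det_submatrix_neq_0_if_kernel_trivial)
    show "map_mat (peval f) P \<in> carrier_mat (length rs) (length cs)"
      by (simp add: P_def)
    show "I \<subseteq> {..<length rs}" "J \<subseteq> {..<length cs}"
      by (auto simp: I_def J_def)
    show "card I = card J"
      using bij_betw_same_card[OF bij_I] bij_betw_same_card[OF bij_J] card by simp
    fix w assume w: "\<forall>a\<in>I. (\<Sum>b\<in>J. map_mat (peval f) P $$ (a, b) * w b) = 0"
    have "\<forall>a\<in>I. (\<Sum>b\<in>J. jac_at f V D (rs ! a) (cs ! b) * w b) = 0"
    proof
      fix a assume "a \<in> I"
      then have "(\<Sum>b\<in>J. jac_at f V D (rs ! a) (cs ! b) * w b) = (\<Sum>b\<in>J. map_mat (peval f) P $$ (a, b) * w b)"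
        by (intro sum.cong) (auto simp: I_def J_def P_def jac_at_def peval_pdiff)
      with w \<open>a \<in> I\<close> show "(\<Sum>b\<in>J. jac_at f V D (rs ! a) (cs ! b) * w b) = 0"
        by simp
    qed
    then show "\<forall>b\<in>J. w b = 0"
      using trivial_kernel_reindex[OF bij_I bij_J, of "jac_at f V D"] kernel by blast
  qed
  then have "card J \<le> vec_space.rank (length rs) (map_mat (\<lambda>p. Fract p 1) P)"
    by (intro rank_Fract_ge_card_if_minor_at_point) (auto simp: P_def J_def)
  moreover have "JS V D S = map_mat (\<lambda>p. Fract p 1) P"
    by (rule eq_matI) (auto simp: JS_def Let_def P_def rs_def cs_def)
  ultimately show ?thesis
    using bij_betw_same_card[OF bij_J] by (simp add: rankJS_def rs)
qed

section \<open>The Jacobian at \<open>s = 1\<close>, \<open>\<lambda>\<^sub>k\<^sub>l = [l = i]\<close>\<close>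

lemma simple_digraphD:
  assumes "simple_digraph V D"
  shows "finite V" "finite D" "D \<subseteq> V \<times> V" "(a, a) \<notin> D" "(a, b) \<in> D \<Longrightarrow> (b, a) \<notin> D"
  using assms finite_subset[of D "V \<times> V"] by (auto simp: simple_digraph_def)

definition into_point :: "'v \<Rightarrow> 'v param \<Rightarrow> real" where
  "into_point i x = (case x of None \<Rightarrow> 1 | Some (k, l) \<Rightarrow> of_bool (l = i))"

lemma peval_IminusLam_into_point:
  "peval (into_point i) (IminusLam D a b) = of_bool (a = b) - of_bool ((a, b) \<in> D \<and> b = i)"
  by (simp add: IminusLam_def Lam_def peval.hom_minus peval_pvar into_point_def)

lemma deriv_eval_IminusLam:
  "deriv_eval f x (IminusLam D a b) = - of_bool ((a, b) \<in> D \<and> x = Some (a, b))"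
  by (auto simp: IminusLam_def Lam_def deriv_eval.hom_minus deriv_eval_1 deriv_eval_pvar)

lemma jac_at_eq:
  "jac_at f V D x (a, b) =
     of_bool (x = None) * (\<Sum>k\<in>V. peval f (IminusLam D a k) * peval f (IminusLam D b k))
   + f None * (\<Sum>k\<in>V. deriv_eval f x (IminusLam D a k) * peval f (IminusLam D b k)
                    + peval f (IminusLam D a k) * deriv_eval f x (IminusLam D b k))"
  by (simp add: jac_at_def Kmat_def deriv_eval_mult deriv_eval.hom_sum peval.hom_sum peval.hom_mult
      deriv_eval_pvar peval_pvar)

lemma jac_at_into_point_None:
  assumes "simple_digraph V D" "i \<in> V" "a \<in> V" "b \<in> V" "a \<noteq> i" "b \<noteq> i"
  shows "jac_at (into_point i) V D None (a, b) = of_bool (a = b) + of_bool ((a, i) \<in> D \<and> (b, i) \<in> D)"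
proof -
  have "jac_at (into_point i) V D None (a, b) = (\<Sum>k\<in>V.
      (of_bool (a = k) - of_bool ((a, k) \<in> D \<and> k = i)) * (of_bool (b = k) - of_bool ((b, k) \<in> D \<and> k = i)))"
    by (simp add: jac_at_eq peval_IminusLam_into_point deriv_eval_IminusLam into_point_def)
  also have "\<dots> = (\<Sum>k\<in>V. (if k = a then of_bool (a = b) else 0)
      + (if k = i then of_bool ((a, i) \<in> D \<and> (b, i) \<in> D) else 0))"
    using assms(5,6) by (intro sum.cong) auto
  also have "\<dots> = of_bool (a = b) + of_bool ((a, i) \<in> D \<and> (b, i) \<in> D)"
    using assms(2,3) simple_digraphD(1)[OF assms(1)] by (simp add: sum.distrib)
  finally show ?thesis .
qed

lemma jac_at_into_point_Some:
  assumes "simple_digraph V D" "(k, l) \<in> D" "a \<in> V" "b \<in> V"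
  shows "jac_at (into_point i) V D (Some (k, l)) (a, b) =
    - of_bool (a = k) * peval (into_point i) (IminusLam D b l)
    - of_bool (b = k) * peval (into_point i) (IminusLam D a l)"
proof -
  have "jac_at (into_point i) V D (Some (k, l)) (a, b) = (\<Sum>m\<in>V. if m = l then
      - of_bool (a = k) * peval (into_point i) (IminusLam D b l)
      - of_bool (b = k) * peval (into_point i) (IminusLam D a l) else 0)"
    using assms(2) by (auto simp: jac_at_eq deriv_eval_IminusLam into_point_def intro!: sum.cong)
  also have "\<dots> = - of_bool (a = k) * peval (into_point i) (IminusLam D b l)
      - of_bool (b = k) * peval (into_point i) (IminusLam D a l)"
    using simple_digraphD(1,3)[OF assms(1)] assms(2) by auto
  finally show ?thesis .
qed

lemma jac_at_into_point_Some_not_into: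
  fixes V :: "'v::linorder set"
  assumes "simple_digraph V D" "(k, l) \<in> D" "l \<noteq> i" "a \<in> V" "b \<in> V" "a \<le> b"
  shows "jac_at (into_point i) V D (Some (k, l)) (a, b) = - of_bool ((a, b) = (min k l, max k l))"
proof -
  have "k \<noteq> l"
    using simple_digraphD(4)[OF assms(1)] assms(2) by auto
  then show ?thesis
    using assms by (auto simp: jac_at_into_point_Some peval_IminusLam_into_point min_def max_def)
qed

lemma jac_at_into_point_Some_into:
  assumes "simple_digraph V D" "(k, i) \<in> D" "a \<in> V" "b \<in> V" "a \<noteq> i" "b \<noteq> i"
  shows "jac_at (into_point i) V D (Some (k, i)) (a, b) =
    of_bool (a = k \<and> (b, i) \<in> D) + of_bool (b = k \<and> (a, i) \<in> D)"
  using assms by (simp add: jac_at_into_point_Some peval_IminusLam_into_point)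

lemma jac_at_into_point_Some_diag:
  assumes "simple_digraph V D" "(k, i) \<in> D" "(m, i) \<in> D"
  shows "jac_at (into_point i) V D (Some (k, i)) (m, m) = 2 * of_bool (m = k)"
proof -
  have "m \<in> V" "m \<noteq> i"
    using simple_digraphD(3,4)[OF assms(1)] assms(3) by auto
  with assms show ?thesis
    by (simp add: jac_at_into_point_Some_into)
qed

lemma jac_at_into_point_None_diag:
  assumes "simple_digraph V D" "i \<in> V" "(m, i) \<in> D"
  shows "jac_at (into_point i) V D None (m, m) = 2"
proof -
  have "m \<in> V" "m \<noteq> i"
    using simple_digraphD(3,4)[OF assms(1)] assms(3) by auto
  with assms show ?thesis
    by (simp add: jac_at_into_point_None)
qed

lemma arrowhead_kernel_trivial:
  fixes u :: "'k \<Rightarrow> real"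
  assumes rows: "\<And>k. k \<in> P \<Longrightarrow> 2 * u k + \<alpha> k * u0 = 0"
    and last_row: "2 * (\<Sum>k\<in>P. u k) + \<beta> * u0 = 0"
    and corner: "\<beta> \<noteq> (\<Sum>k\<in>P. \<alpha> k)"
  shows "u0 = 0" "\<forall>k\<in>P. u k = 0"
proof -
  have "2 * (\<Sum>k\<in>P. u k) = (\<Sum>k\<in>P. - (\<alpha> k * u0))"
    unfolding sum_distrib_left using rows by (intro sum.cong) (simp_all add: eq_neg_iff_add_eq_0)
  also have "\<dots> = - (\<Sum>k\<in>P. \<alpha> k) * u0"
    by (simp add: sum_negf sum_distrib_right)
  finally have "(\<beta> - (\<Sum>k\<in>P. \<alpha> k)) * u0 = 0"
    using last_row by (simp add: algebra_simps)
  with corner show "u0 = 0"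
    by simp
  with rows show "\<forall>k\<in>P. u k = 0"
    by simp
qed

section \<open>A minor with trivial kernel\<close>

definition arcs_not_from :: "('v \<times> 'v) set \<Rightarrow> 'v \<Rightarrow> ('v \<times> 'v) set" where
  "arcs_not_from D i = {e \<in> D. fst e \<noteq> i}"

definition Kcols_avoiding :: "('v::linorder) set \<Rightarrow> 'v \<Rightarrow> ('v \<times> 'v) set" where
  "Kcols_avoiding V i = {(a, b) \<in> Kcols V. a \<noteq> i \<and> b \<noteq> i}"

text \<open>The column matched with the row \<open>\<lambda>\<^sub>k\<^sub>l\<close>: the entry \<open>K\<^sub>k\<^sub>l\<close>, or the diagonal entry \<open>K\<^sub>k\<^sub>k\<close>
  when \<open>l = i\<close>, since the columns through \<open>i\<close> are not available.\<close>

definition arc_column :: "'v::linorder \<Rightarrow> 'v \<times> 'v \<Rightarrow> 'v \<times> 'v" where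
  "arc_column i e = (if snd e = i then (fst e, fst e) else (min (fst e) (snd e), max (fst e) (snd e)))"

lemma inj_on_arc_column:
  assumes "simple_digraph V D"
  shows "inj_on (arc_column i) (arcs_not_from D i)"
proof (rule inj_onI)
  fix e e' assume "e \<in> arcs_not_from D i" "e' \<in> arcs_not_from D i" "arc_column i e = arc_column i e'"
  with simple_digraphD(4,5)[OF assms] show "e = e'"
    by (cases e; cases e') (auto simp: arcs_not_from_def arc_column_def min_def max_def split: if_splits)
qed

lemma arc_column_in_Kcols_avoiding:
  assumes "simple_digraph V D" "e \<in> arcs_not_from D i"
  shows "arc_column i e \<in> Kcols_avoiding V i"
  using assms simple_digraphD(3,4)[OF assms(1)]
  by (cases e) (auto simp: arcs_not_from_def arc_column_def Kcols_avoiding_def Kcols_def min_def max_def)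

lemma kernel_vanishes_at_arc_not_into:
  fixes V :: "'v::linorder set"
  assumes simple: "simple_digraph V D"
    and c0: "c0 \<in> Kcols_avoiding V i" "c0 \<notin> arc_column i ` arcs_not_from D i"
    and e: "e \<in> arcs_not_from D i" "snd e \<noteq> i"
    and eq: "(\<Sum>e'\<in>arcs_not_from D i. jac_at (into_point i) V D (Some e) (arc_column i e') * u e')
      + jac_at (into_point i) V D (Some e) c0 * u0 = 0"
  shows "u e = 0"
proof -
  have entry: "jac_at (into_point i) V D (Some e) c = - of_bool (c = arc_column i e)"
    if "c \<in> Kcols_avoiding V i" for c
    using that e jac_at_into_point_Some_not_into[OF simple, of "fst e" "snd e" i]
    by (auto simp: Kcols_avoiding_def Kcols_def arcs_not_from_def arc_column_def)
  have "(\<Sum>e'\<in>arcs_not_from D i. jac_at (into_point i) V D (Some e) (arc_column i e') * u e')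
      = (\<Sum>e'\<in>arcs_not_from D i. if e' = e then - u e' else 0)"
    using entry arc_column_in_Kcols_avoiding[OF simple] inj_on_eq_iff[OF inj_on_arc_column[OF simple]] e(1)
    by (intro sum.cong) auto
  also have "\<dots> = - u e"
    using e(1) simple_digraphD(2)[OF simple] by (simp add: arcs_not_from_def)
  moreover have "c0 \<noteq> arc_column i e"
    using c0(2) e(1) by blast
  ultimately show ?thesis
    using eq entry[OF c0(1)] by simp
qed

lemma sum_arcs_not_from_eq_sum_into:
  fixes g :: "'v::linorder \<times> 'v \<Rightarrow> real"
  assumes simple: "simple_digraph V D"
    and vanish: "\<And>e. e \<in> arcs_not_from D i \<Longrightarrow> snd e \<noteq> i \<Longrightarrow> u e = 0"
  shows "(\<Sum>e\<in>arcs_not_from D i. g (arc_column i e) * u e) = (\<Sum>k | (k, i) \<in> D. g (k, k) * u (k, i))"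
proof -
  have fin: "finite (arcs_not_from D i)"
    using simple_digraphD(2)[OF simple] by (simp add: arcs_not_from_def)
  have "(\<Sum>e\<in>arcs_not_from D i. g (arc_column i e) * u e)
      = (\<Sum>e\<in>{e \<in> arcs_not_from D i. snd e = i}. g (arc_column i e) * u e)"
    using fin vanish by (intro sum.mono_neutral_right) auto
  also have "{e \<in> arcs_not_from D i. snd e = i} = (\<lambda>k. (k, i)) ` {k. (k, i) \<in> D}"
    using simple_digraphD(4)[OF simple] by (auto simp: arcs_not_from_def)
  also have "(\<Sum>e\<in>(\<lambda>k. (k, i)) ` {k. (k, i) \<in> D}. g (arc_column i e) * u e)
      = (\<Sum>k | (k, i) \<in> D. g (k, k) * u (k, i))"
    by (subst sum.reindex) (auto simp: inj_on_def arc_column_def)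
  finally show ?thesis .
qed

lemma jac_minor_kernel_trivial:
  fixes V :: "'v::linorder set"
  assumes simple: "simple_digraph V D" and i: "i \<in> V"
    and c0: "(a, b) \<in> Kcols_avoiding V i" "(a, b) \<notin> arc_column i ` arcs_not_from D i"
    and parity: "(a = b) \<noteq> ((a, i) \<in> D \<and> (b, i) \<in> D)"
    and eq: "\<And>x. x \<in> Some ` arcs_not_from D i \<union> {None} \<Longrightarrow>
      (\<Sum>e\<in>arcs_not_from D i. jac_at (into_point i) V D x (arc_column i e) * u e)
      + jac_at (into_point i) V D x (a, b) * u0 = 0"
  shows "(\<forall>e\<in>arcs_not_from D i. u e = 0) \<and> u0 = 0"
proof -
  let ?J = "jac_at (into_point i) V D"
  define P where "P = {k. (k, i) \<in> D}"
  have P: "finite P" "P \<subseteq> V - {i}"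
    using simple_digraphD[OF simple] finite_subset[of P V] by (auto simp: P_def)
  have ab: "a \<in> V" "b \<in> V" "a \<noteq> i" "b \<noteq> i"
    using c0(1) by (auto simp: Kcols_avoiding_def Kcols_def)
  have off: "u e = 0" if "e \<in> arcs_not_from D i" "snd e \<noteq> i" for e
    using kernel_vanishes_at_arc_not_into[OF simple c0 that eq] that by blast
  have reduce: "(\<Sum>e\<in>arcs_not_from D i. ?J x (arc_column i e) * u e) = (\<Sum>k\<in>P. ?J x (k, k) * u (k, i))" for x
    unfolding P_def by (rule sum_arcs_not_from_eq_sum_into[OF simple off])
  define \<alpha> :: "'v \<Rightarrow> real" where
    "\<alpha> k = (if k = a then of_bool (b \<in> P) else 0) + (if k = b then of_bool (a \<in> P) else 0)" for k
  have row_into: "2 * u (k, i) + \<alpha> k * u0 = 0" if "k \<in> P" for k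
  proof -
    have "(\<Sum>m\<in>P. ?J (Some (k, i)) (m, m) * u (m, i)) = (\<Sum>m\<in>P. if m = k then 2 * u (m, i) else 0)"
      using that by (intro sum.cong) (auto simp: P_def jac_at_into_point_Some_diag[OF simple])
    moreover have "?J (Some (k, i)) (a, b) = \<alpha> k"
      using that by (auto simp: jac_at_into_point_Some_into[OF simple _ ab] P_def \<alpha>_def)
    moreover have "(k, i) \<in> arcs_not_from D i"
      using that P by (auto simp: P_def arcs_not_from_def)
    ultimately show ?thesis
      using eq[of "Some (k, i)"] reduce that P(1) by simp
  qed
  have row_None: "2 * (\<Sum>k\<in>P. u (k, i)) + (of_bool (a = b) + of_bool (a \<in> P \<and> b \<in> P)) * u0 = 0"
  proof -
    have "(\<Sum>m\<in>P. ?J None (m, m) * u (m, i)) = 2 * (\<Sum>k\<in>P. u (k, i))"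
      by (simp add: P_def jac_at_into_point_None_diag[OF simple i] sum_distrib_left)
    then show ?thesis
      using eq[of None] reduce[of None] jac_at_into_point_None[OF simple i ab] by (simp add: P_def)
  qed
  have "of_bool (a = b) + of_bool (a \<in> P \<and> b \<in> P) \<noteq> (\<Sum>k\<in>P. \<alpha> k)"
    using parity P(1) by (auto simp: \<alpha>_def sum.distrib P_def)
  note arrowhead = arrowhead_kernel_trivial[of P "\<lambda>k. u (k, i)", OF row_into row_None this]
  have "u e = 0" if "e \<in> arcs_not_from D i" for e
    using off that arrowhead(2) by (cases e; cases "snd e = i") (auto simp: arcs_not_from_def P_def)
  with arrowhead(1) show ?thesis
    by blast
qed

lemma rankJS_ge_via_extra_column:
  fixes V :: "'v::linorder set"
  assumes simple: "simple_digraph V D" and i: "i \<in> V"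
    and c0: "(a, b) \<in> Kcols_avoiding V i" "(a, b) \<notin> arc_column i ` arcs_not_from D i"
    and parity: "(a = b) \<noteq> ((a, i) \<in> D \<and> (b, i) \<in> D)"
    and S: "finite S" "arc_column i ` arcs_not_from D i \<union> {(a, b)} \<subseteq> S"
  shows "card (arcs_not_from D i) + 1 \<le> rankJS V D S"
proof -
  let ?A = "arcs_not_from D i"
  let ?C = "arc_column i ` ?A \<union> {(a, b)}"
  let ?R = "Some ` ?A \<union> {None}"
  let ?J = "jac_at (into_point i) V D"
  have fin: "finite ?A"
    using simple_digraphD(2)[OF simple] by (simp add: arcs_not_from_def)
  have card_C: "card ?C = card ?A + 1"
    using fin c0(2) card_image[OF inj_on_arc_column[OF simple]] by simp
  have "card ?C \<le> rankJS V D S"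
  proof (rule rankJS_ge_card_if_kernel_trivial[where f = "into_point i" and R = ?R])
    show "finite D"
      using simple_digraphD(2)[OF simple] .
    show "?R \<subseteq> params D"
      by (auto simp: params_def arcs_not_from_def)
    show "card ?R = card ?C"
      using fin card_C card_image[of Some ?A] by simp
    fix w assume w: "\<forall>x\<in>?R. (\<Sum>c\<in>?C. ?J x c * w c) = 0"
    have split: "(\<Sum>c\<in>?C. ?J x c * w c)
        = (\<Sum>e\<in>?A. ?J x (arc_column i e) * w (arc_column i e)) + ?J x (a, b) * w (a, b)" for x
      using fin c0(2) by (simp add: sum.reindex[OF inj_on_arc_column[OF simple]])
    have "(\<forall>e\<in>?A. w (arc_column i e) = 0) \<and> w (a, b) = 0"
      by (rule jac_minor_kernel_trivial[OF simple i c0 parity, where u = "\<lambda>e. w (arc_column i e)"])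
        (use w split in auto)
    then show "\<forall>c\<in>?C. w c = 0"
      by auto
  qed (use S in auto)
  with card_C show ?thesis
    by simp
qed

section \<open>Counting columns\<close>

lemma card_arcs_less_card_pairs:
  assumes simple: "simple_digraph V D" and "\<not> complete_digraph V D"
  shows "card D < card {(a, b). a \<in> V \<and> b \<in> V \<and> a < (b :: 'v::linorder)}"
proof -
  let ?pairs = "{(a, b). a \<in> V \<and> b \<in> V \<and> a < b}"
  define sort_pair :: "'v \<times> 'v \<Rightarrow> 'v \<times> 'v" where "sort_pair = (\<lambda>(k, l). (min k l, max k l))"
  obtain u w where uw: "u \<in> V" "w \<in> V" "u \<noteq> w" "(u, w) \<notin> D" "(w, u) \<notin> D"
    using assms(2) by (auto simp: complete_digraph_def)
  have fin: "finite ?pairs"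
    using simple_digraphD(1)[OF simple] by (auto intro: finite_subset[of _ "V \<times> V"])
  have "inj_on sort_pair D"
    using simple_digraphD(4,5)[OF simple]
    by (auto simp: inj_on_def sort_pair_def min_def max_def split: if_splits)
  then have "card D = card (sort_pair ` D)"
    by (simp add: card_image)
  also have "\<dots> \<le> card (?pairs - {sort_pair (u, w)})"
  proof (rule card_mono)
    show "sort_pair ` D \<subseteq> ?pairs - {sort_pair (u, w)}"
      using simple_digraphD(3,4)[OF simple] uw(4,5)
      by (auto simp: sort_pair_def min_def max_def less_le split: if_splits)
  qed (use fin in simp)
  also have "\<dots> < card ?pairs"
    using fin uw(1-3) by (intro card_Diff1_less) (auto simp: sort_pair_def min_def max_def)
  finally show ?thesis .
qed

lemma card_pairs_le_card_Kcols_avoiding: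
  fixes V :: "'v::linorder set"
  assumes "finite V"
  shows "card {(a, b). a \<in> V \<and> b \<in> V \<and> a < b} \<le> card (Kcols_avoiding V i)"
proof (rule card_inj_on_le)
  \<comment> \<open>a pair through \<open>i\<close> goes to the diagonal entry of its other end\<close>
  let ?h = "\<lambda>(a, b). if a = i then (b, b) else if b = i then (a, a) else (a :: 'v, b :: 'v)"
  show "inj_on ?h {(a, b). a \<in> V \<and> b \<in> V \<and> a < b}"
    by (auto simp: inj_on_def split: if_splits)
  show "?h ` {(a, b). a \<in> V \<and> b \<in> V \<and> a < b} \<subseteq> Kcols_avoiding V i"
    by (auto simp: Kcols_avoiding_def Kcols_def split: if_splits)
  show "finite (Kcols_avoiding V i)"
    using assms by (auto simp: Kcols_avoiding_def Kcols_def intro: finite_subset[of _ "V \<times> V"])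
qed

lemma card_le_card_arcs_not_from_add_children:
  assumes "finite D"
  shows "card D \<le> card (arcs_not_from D i) + card (children D i)"
proof -
  have "D \<subseteq> arcs_not_from D i \<union> Pair i ` children D i"
    by (auto simp: arcs_not_from_def children_def)
  moreover have "Pair i ` children D i \<subseteq> D"
    by (auto simp: children_def)
  ultimately have "card D \<le> card (arcs_not_from D i \<union> Pair i ` children D i)"
    using assms finite_subset by (intro card_mono) (auto simp: arcs_not_from_def)
  also have "\<dots> \<le> card (arcs_not_from D i) + card (Pair i ` children D i)"
    by (rule card_Un_le)
  also have "card (Pair i ` children D i) = card (children D i)"
    by (simp add: card_image inj_on_def)
  finally show ?thesis .
qed

lemma extra_column_exists:
  fixes V :: "'v::linorder set"
  assumes simple: "simple_digraph V D" and i: "i \<in> V" and "\<not> complete_digraph V D"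
  obtains a b where "(a, b) \<in> Kcols_avoiding V i" "(a, b) \<notin> arc_column i ` arcs_not_from D i"
    "(a = b) \<noteq> ((a, i) \<in> D \<and> (b, i) \<in> D)"
proof (cases "\<exists>a\<in>V. a \<noteq> i \<and> (a, i) \<notin> D")
  case True
  then obtain a where a: "a \<in> V" "a \<noteq> i" "(a, i) \<notin> D"
    by blast
  have "(a, a) \<notin> arc_column i ` arcs_not_from D i"
    using a simple_digraphD(4)[OF simple]
    by (auto simp: arc_column_def arcs_not_from_def min_def max_def split: if_splits)
  with a show thesis
    by (intro that[of a a]) (auto simp: Kcols_avoiding_def Kcols_def)
next
  case False
  obtain u w where uw: "u \<in> V" "w \<in> V" "u \<noteq> w" "(u, w) \<notin> D" "(w, u) \<notin> D"
    using assms(3) by (auto simp: complete_digraph_def)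
  with False have ui: "u \<noteq> i" "w \<noteq> i"
    by auto
  with False uw have "(u, i) \<in> D" "(w, i) \<in> D"
    by auto
  moreover have "(min u w, max u w) \<notin> arc_column i ` arcs_not_from D i"
    using uw(3-5) simple_digraphD(4)[OF simple]
    by (auto simp: arc_column_def arcs_not_from_def min_def max_def split: if_splits)
  ultimately show thesis
    using uw(1-3) ui by (intro that[of "min u w" "max u w"]) (auto simp: Kcols_avoiding_def Kcols_def min_def max_def)
qed

lemma extend_to_columns_avoiding:
  fixes V :: "'v::linorder set"
  assumes simple: "simple_digraph V D" and "\<not> complete_digraph V D" and "(a, b) \<in> Kcols_avoiding V i"
  obtains S where "arc_column i ` arcs_not_from D i \<union> {(a, b)} \<subseteq> S" "S \<subseteq> Kcols_avoiding V i"
    "card S = card D + 1"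
proof -
  let ?A = "arcs_not_from D i"
  let ?C = "arc_column i ` ?A \<union> {(a, b)}"
  have fin_D: "finite D"
    using simple_digraphD(2)[OF simple] .
  have "card ?C \<le> card ?A + 1"
    using card_Un_le[of "arc_column i ` ?A" "{(a, b)}"] card_image_le[of ?A "arc_column i"] fin_D
    by (simp add: arcs_not_from_def)
  also have "\<dots> \<le> card D + 1"
    using fin_D by (simp add: card_mono arcs_not_from_def)
  finally have card_C: "card ?C \<le> card D + 1" .
  have card_K: "card D + 1 \<le> card (Kcols_avoiding V i)"
    using card_arcs_less_card_pairs[OF assms(1,2)]
      card_pairs_le_card_Kcols_avoiding[OF simple_digraphD(1)[OF simple], of i]
    by linarith
  then have "finite (Kcols_avoiding V i)"
    using card_ge_0_finite by force
  moreover have "?C \<subseteq> Kcols_avoiding V i"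
    using assms(3) arc_column_in_Kcols_avoiding[OF simple] by auto
  ultimately show thesis
    using exists_subset_between[OF card_C card_K] that by blast
qed

theorem lemma4p2:
  fixes V :: "('v::linorder) set" and D :: "('v \<times> 'v) set"
  assumes "simple_digraph V D"
    and "\<not> complete_digraph V D"
  shows "\<forall>i\<in>V. \<exists>S. S \<subseteq> Kcols V \<and> card S = card D + 1
            \<and> (\<forall>(a, b)\<in>S. a \<noteq> i \<and> b \<noteq> i)
            \<and> rankJS V D S \<ge> card D - card (children D i) + 1"
proof
  fix i assume i: "i \<in> V"
  obtain a b where ab: "(a, b) \<in> Kcols_avoiding V i" "(a, b) \<notin> arc_column i ` arcs_not_from D i"
    "(a = b) \<noteq> ((a, i) \<in> D \<and> (b, i) \<in> D)"
    using extra_column_exists[OF assms(1) i assms(2)] .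
  obtain S where S: "arc_column i ` arcs_not_from D i \<union> {(a, b)} \<subseteq> S" "S \<subseteq> Kcols_avoiding V i"
    "card S = card D + 1"
    using extend_to_columns_avoiding[OF assms ab(1)] .
  have "finite S"
    using S(3) card_ge_0_finite by force
  then have "card (arcs_not_from D i) + 1 \<le> rankJS V D S"
    using rankJS_ge_via_extra_column[OF assms(1) i ab] S(1) by blast
  moreover have "card D - card (children D i) + 1 \<le> card (arcs_not_from D i) + 1"
    using card_le_card_arcs_not_from_add_children[OF simple_digraphD(2)[OF assms(1)], of i] by simp
  ultimately show "\<exists>S. S \<subseteq> Kcols V \<and> card S = card D + 1
            \<and> (\<forall>(a, b)\<in>S. a \<noteq> i \<and> b \<noteq> i)
            \<and> rankJS V D S \<ge> card D - card (children D i) + 1"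
    using S(2,3) by (intro exI[of _ S]) (auto simp: Kcols_avoiding_def)
qed

end
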